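(* Let $X$ be a topological space (no separation axioms assumed) that is both locally $\mathfrak{c}$ and $\mathfrak{c}$-fair, and suppose $t(x,X)<\operatorname{cf}(\mathfrak{c})$ for every $x\in X$. If $|X|>\mathfrak{c}$, then there exists a clopen subset $U$ of $X$ with $|U|=L(U)=\mathfrak{c}$.
   Context: A space $X$ is locally $\mathfrak{c}$ if every point has a neighbourhood of cardinality $\le\mathfrak{c}$. $X$ is $\mathfrak{c}$-fair if the closure of every subset of $X$ of cardinality $\mathfrak{c}$ also has cardinality $\mathfrak{c}$. $t(x,X)$ denotes the tightness of $X$ at $x$, and $L(U)$ the Lindelöf number of $U$ (the least infinite cardinal $\lambda$ such that every open cover of $U$ has a subcover of size $\le\lambda$). *)

theory Defs
  imports "HOL-Analysis.Analysis"
begin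

text \<open>Cardinal comparison via the HOL cardinal library (card_of, ordLeq, ordLess, ordIso).
  The continuum c is represented by the cardinal of UNIV :: real set.\<close>

definition continuum :: "real rel" where
  "continuum = card_of (UNIV :: real set)"

text \<open>|K| < cf(c): the cardinality of K is strictly below every cofinal subset
  of the (initial) well-order c, i.e. below the cofinality of c.\<close>
definition below_cf_continuum :: "'b set \<Rightarrow> bool" where
  "below_cf_continuum K \<longleftrightarrow>
     (\<forall>A. cofinal A continuum \<longrightarrow> (card_of K, card_of A) \<in> ordLess)"

definition tightness_le :: "'a topology \<Rightarrow> 'a \<Rightarrow> 'b set \<Rightarrow> bool" where
  "tightness_le X x K \<longleftrightarrow>
     (\<forall>Y. Y \<subseteq> topspace X \<and> x \<in> X closure_of Y \<longrightarrow>
        (\<exists>B\<subseteq>Y. (card_of B, card_of K) \<in> ordLeq \<and> x \<in> X closure_of B))"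

text \<open>Since cf(c) is uncountable, the convention that tightness is an
  infinite cardinal makes no difference; and since cf(c) \<le> c the witness cardinal
  can be taken as the cardinal of a set of reals.\<close>
definition tightness_below_cf_continuum :: "'a topology \<Rightarrow> 'a \<Rightarrow> bool" where
  "tightness_below_cf_continuum X x \<longleftrightarrow>
     (\<exists>K :: real set. below_cf_continuum K \<and> tightness_le X x K)"

definition locally_continuum :: "'a topology \<Rightarrow> bool" where
  "locally_continuum X \<longleftrightarrow>
     (\<forall>x\<in>topspace X. \<exists>N V. openin X V \<and> x \<in> V \<and> V \<subseteq> N \<and> N \<subseteq> topspace X
        \<and> (card_of N, continuum) \<in> ordLeq)"

definition continuum_fair :: "'a topology \<Rightarrow> bool" where
  "continuum_fair X \<longleftrightarrow>
     (\<forall>A. A \<subseteq> topspace X \<and> (card_of A, continuum) \<in> ordIso \<longrightarrow>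
        (card_of (X closure_of A), continuum) \<in> ordIso)"

text \<open>L(U) \<le> |K| (for infinite K): every cover of U by open sets of X
  (equivalently, open cover of the subspace U) has a subcover of size at most |K|.\<close>
definition lindelof_le :: "'a topology \<Rightarrow> 'a set \<Rightarrow> 'b set \<Rightarrow> bool" where
  "lindelof_le X U K \<longleftrightarrow>
     (\<forall>\<U>. (\<forall>V\<in>\<U>. openin X V) \<and> U \<subseteq> \<Union>\<U> \<longrightarrow>
        (\<exists>\<V>\<subseteq>\<U>. U \<subseteq> \<Union>\<V> \<and> (card_of \<V>, card_of K) \<in> ordLeq))"

definition lindelof_eq_continuum :: "'a topology \<Rightarrow> 'a set \<Rightarrow> bool" where
  "lindelof_eq_continuum X U \<longleftrightarrow>
     lindelof_le X U (UNIV :: real set) \<and>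
     (\<forall>K :: real set. infinite K \<and> (card_of K, continuum) \<in> ordLess \<longrightarrow> \<not> lindelof_le X U K)"

end

theory Submission
  imports Defs
begin

text \<open>Well-order the reals in type \<open>\<mathfrak>c\<close> and build an increasing chain of closed sets
  \<open>W\<^sub>a\<close> of size \<open>\<le> \<mathfrak>c\<close>: \<open>W\<^sub>a\<close> is the closure of the earlier stages, of a fresh point
  \<open>p\<^sub>a\<close>, and of a neighbourhood of size \<open>\<le> \<mathfrak>c\<close> of each of these points; \<open>\<mathfrak>c\<close>-fairness
  keeps the closure small. The union \<open>U\<close> is open since each point of \<open>W\<^sub>b\<close> has its
  neighbourhood inside \<open>W\<^sub>a\<close> for \<open>b < a\<close>, closed since a point of its closure is, by
  tightness below \<open>cf(\<mathfrak>c)\<close>, in the closure of a set meeting boundedly many stages, and of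
  size \<open>\<mathfrak>c\<close> thanks to the fresh points. Finally, \<open>U\<close> is covered by the open kernels of the
  stages; fewer than \<open>\<mathfrak>c\<close> of them lie in a bounded part of the chain and miss a later fresh
  point. When the number of sets is not below \<open>cf(\<mathfrak>c)\<close>, the chain is first cut at the least
  initial segment that is too long to be bounded, whose union is again clopen.\<close>

unbundle cardinal_syntax

definition small_sets_bounded :: "'b rel \<Rightarrow> 'b set \<Rightarrow> 'c set \<Rightarrow> bool" where
  "small_sets_bounded r J K \<longleftrightarrow> (\<forall>B\<subseteq>J. |B| \<le>o |K| \<longrightarrow> (\<exists>j\<in>J. B \<subseteq> underS r j))"

lemma small_sets_bounded_mono:
  assumes "small_sets_bounded r J K" and "|K'| \<le>o |K|"
  shows "small_sets_bounded r J K'"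
  using assms ordLeq_transitive unfolding small_sets_bounded_def by blast

lemma small_sets_bounded_no_greatest:
  assumes "small_sets_bounded r J K" and "K \<noteq> {}" and "b \<in> J"
  shows "\<exists>j\<in>J. b \<in> underS r j"
  using assms card_of_singl_ordLeq[of K b] unfolding small_sets_bounded_def by blast

lemma small_sets_bounded_Field:
  assumes r: "Card_order r" "infinite (Field r)"
    and below_cf: "\<forall>A. cofinal A r \<longrightarrow> |K| <o |A|"
  shows "small_sets_bounded r (Field r) K"
  unfolding small_sets_bounded_def
proof (intro allI impI)
  fix B assume B: "B \<subseteq> Field r" "|B| \<le>o |K|"
  have wo: "wo_rel r"
    using r(1) card_order_on_well_order_on unfolding wo_rel_def by blast
  have "\<not> cofinal B r" using below_cf B not_ordLess_ordLeq by blast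
  then obtain a where a: "a \<in> Field r" "\<forall>b\<in>B. \<not> (a \<noteq> b \<and> (a,b) \<in> r)"
    unfolding cofinal_def by blast
  obtain j where j: "j \<in> Field r" "a \<noteq> j" "(a,j) \<in> r"
    using infinite_Card_order_limit[OF r a(1)] by blast
  have "b \<in> underS r j" if "b \<in> B" for b
  proof -
    have "(b,a) \<in> r"
      using a that B wo_rel.TOTALS[OF wo] wo_rel.REFL[OF wo] unfolding refl_on_def
      by (cases "a = b") auto
    hence "(b,j) \<in> r" using j(3) wo_rel.TRANS[OF wo] unfolding trans_def by blast
    moreover have "b \<noteq> j"
      using a j that wo_rel.ANTISYM[OF wo] unfolding antisym_def by blast
    ultimately show ?thesis by (simp add: underS_def)
  qed
  thus "\<exists>j'\<in>Field r. B \<subseteq> underS r j'" using j(1) by blast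
qed

text \<open>If \<open>cf(r) \<le> |K|\<close>, the least initial segment of size \<open>> |K|\<close> has all its subsets of size
  \<open>\<le> |K|\<close> bounded, since each of them is covered by \<open>|K|\<close> shorter segments.\<close>
lemma small_sets_bounded_underS:
  assumes wo: "Well_order r" and K: "infinite K" "|K| <o |Field r|"
    and A: "cofinal A r" "|A| \<le>o |K|"
  obtains a where "small_sets_bounded r (underS r a) K"
proof -
  let ?S = "{a. |K| <o |underS r a|}"
  have "?S \<noteq> {}"
  proof
    assume "?S = {}"
    hence "\<forall>b\<in>A. |underS r b| \<le>o |K|"
      by (simp add: not_ordLess_iff_ordLeq[OF card_of_Well_order card_of_Well_order])
    hence "|\<Union>b\<in>A. underS r b| \<le>o |K|"
      using card_of_UNION_ordLeq_infinite[OF K(1) A(2)] by blast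
    moreover have "Field r \<subseteq> (\<Union>b\<in>A. underS r b)"
      using A(1) unfolding cofinal_def underS_def by blast
    ultimately have "|Field r| \<le>o |K|"
      by (meson card_of_mono1 ordLeq_transitive)
    thus False using K(2) not_ordLess_ordLeq by blast
  qed
  then obtain a where a: "a \<in> ?S" and minimal: "\<And>b. (b,a) \<in> r - Id \<Longrightarrow> b \<notin> ?S"
    using wfE_min'[OF wo_rel.WF[unfolded wo_rel_def, OF wo]] by metis
  let ?J = "underS r a"
  have short: "|underS r b \<union> {b}| \<le>o |K|" if "b \<in> ?J" for b
  proof -
    have "(b,a) \<in> r - Id" using that unfolding underS_def by blast
    hence "|underS r b| \<le>o |K|"
      using minimal[of b] by (simp add: not_ordLess_iff_ordLeq[OF card_of_Well_order card_of_Well_order])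
    moreover have "|{b}| \<le>o |K|" by (rule card_of_singl_ordLeq) (use K(1) in auto)
    ultimately show ?thesis
      by (rule card_of_Un_ordLeq_infinite_Field[of "|K|", unfolded Field_card_of,
            OF K(1) _ _ card_of_card_order_on])
  qed
  have "small_sets_bounded r ?J K"
    unfolding small_sets_bounded_def
  proof (intro allI impI)
    fix B assume B: "B \<subseteq> ?J" "|B| \<le>o |K|"
    show "\<exists>j\<in>?J. B \<subseteq> underS r j"
    proof (rule ccontr)
      assume unbounded: "\<not> ?thesis"
      have "?J \<subseteq> (\<Union>b\<in>B. underS r b \<union> {b})"
      proof
        fix i assume i: "i \<in> ?J"
        then obtain b where b: "b \<in> B" "b \<notin> underS r i" using unbounded by blast
        have "i \<in> Field r" "b \<in> Field r"
          using underS_Field[OF i] underS_Field[OF subsetD[OF B(1) b(1)]] .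
        hence "i = b \<or> (i,b) \<in> r"
          using b(2) wo_rel.TOTALS[unfolded wo_rel_def, OF wo] unfolding underS_def by blast
        thus "i \<in> (\<Union>b\<in>B. underS r b \<union> {b})" using b(1) unfolding underS_def by blast
      qed
      hence "|?J| \<le>o |\<Union>b\<in>B. underS r b \<union> {b}|" by (rule card_of_mono1)
      moreover have "|\<Union>b\<in>B. underS r b \<union> {b}| \<le>o |K|"
        by (rule card_of_UNION_ordLeq_infinite[OF K(1) B(2)]) (use B(1) short in blast)
      ultimately have "|?J| \<le>o |K|" by (rule ordLeq_transitive)
      thus False using a not_ordLess_ordLeq by blast
    qed
  qed
  thus thesis by (rule that)
qed

lemma lindelof_le_card:
  assumes "|U| \<le>o |K|"
  shows "lindelof_le X U K"
  unfolding lindelof_le_def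
proof (intro allI impI)
  fix \<U> :: "'a set set" assume cover: "(\<forall>V\<in>\<U>. openin X V) \<and> U \<subseteq> \<Union>\<U>"
  define g where "g u = (SOME V. V \<in> \<U> \<and> u \<in> V)" for u
  have g: "g u \<in> \<U> \<and> u \<in> g u" if "u \<in> U" for u
    unfolding g_def by (rule someI_ex) (use cover that in blast)
  have "|g ` U| \<le>o |K|" using card_of_image assms ordLeq_transitive by blast
  thus "\<exists>\<V>\<subseteq>\<U>. U \<subseteq> \<Union>\<V> \<and> |\<V>| \<le>o |K|" using g by (intro exI[of _ "g ` U"]) blast
qed

lemma Card_order_continuum: "Card_order continuum"
  unfolding continuum_def by (rule card_of_Card_order)

lemma Field_continuum [simp]: "Field continuum = UNIV"
  unfolding continuum_def by (rule Field_card_of)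

lemma Well_order_continuum: "Well_order continuum"
  unfolding continuum_def by (rule card_of_Well_order)

lemma wo_rel_continuum: "wo_rel continuum"
  unfolding wo_rel_def by (rule Well_order_continuum)

lemma infinite_Field_continuum: "infinite (Field continuum)"
  by (simp add: infinite_UNIV_char_0)

lemma card_singleton_le_continuum: "|{b}| \<le>o continuum"
  unfolding continuum_def by (rule card_of_singl_ordLeq) simp

lemma continuum_no_greatest: "\<exists>j. a \<in> underS continuum j"
  using infinite_Card_order_limit[OF Card_order_continuum infinite_Field_continuum]
  by (simp add: underS_def)

lemma continuum_underS_cases:
  assumes "a \<noteq> b"
  shows "a \<in> underS continuum b \<or> b \<in> underS continuum a"
  using assms wo_rel.TOTALS[OF wo_rel_continuum] by (auto simp: underS_def)

lemma small_sets_bounded_continuum_UNIV: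
  assumes "below_cf_continuum K"
  shows "small_sets_bounded continuum UNIV K"
  using small_sets_bounded_Field[OF Card_order_continuum infinite_Field_continuum] assms
  unfolding below_cf_continuum_def by simp

locale continuum_fair_space =
  fixes X :: "'a topology"
  assumes locally_continuum: "locally_continuum X"
    and continuum_fair: "continuum_fair X"
    and continuum_less_topspace: "continuum <o |topspace X|"
begin

definition nbhd :: "'a \<Rightarrow> 'a set" where
  "nbhd x = (SOME N. N \<subseteq> topspace X \<and> |N| \<le>o continuum \<and> x \<in> X interior_of N)"

lemma nbhd:
  assumes "x \<in> topspace X"
  shows "nbhd x \<subseteq> topspace X" "|nbhd x| \<le>o continuum" "x \<in> X interior_of nbhd x"
proof -
  obtain N V where NV: "openin X V" "x \<in> V" "V \<subseteq> N" "N \<subseteq> topspace X" "|N| \<le>o continuum"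
    using locally_continuum[unfolded locally_continuum_def, rule_format, OF assms]
    by (elim exE conjE)
  have "x \<in> X interior_of N"
    unfolding interior_of_def using NV(1-3) by (intro CollectI exI[of _ V]) simp
  hence "\<exists>N. N \<subseteq> topspace X \<and> |N| \<le>o continuum \<and> x \<in> X interior_of N"
    using NV(4,5) by (intro exI[of _ N]) simp
  hence "nbhd x \<subseteq> topspace X \<and> |nbhd x| \<le>o continuum \<and> x \<in> X interior_of nbhd x"
    unfolding nbhd_def by (rule someI_ex)
  thus "nbhd x \<subseteq> topspace X" "|nbhd x| \<le>o continuum" "x \<in> X interior_of nbhd x"
    by auto
qed

text \<open>Fairness only speaks about sets of size exactly \<open>\<mathfrak>c\<close>, so smaller sets are first padded
  with \<open>\<mathfrak>c\<close> points, which exist as \<open>|X| > \<mathfrak>c\<close>.\<close>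
lemma card_closure_of_le:
  assumes A: "A \<subseteq> topspace X" "|A| \<le>o continuum"
  shows "|X closure_of A| \<le>o continuum"
proof -
  have "continuum \<le>o |topspace X|" using continuum_less_topspace ordLess_imp_ordLeq by blast
  then obtain f where f: "inj_on f (UNIV :: real set)" "range f \<subseteq> topspace X"
    unfolding continuum_def card_of_ordLeq[symmetric] by blast
  hence "bij_betw f UNIV (range f)" by (simp add: bij_betw_def)
  hence "|UNIV :: real set| =o |range f|" using card_of_ordIso by blast
  hence P: "|range f| =o continuum" unfolding continuum_def using ordIso_symmetric by blast
  have "|A \<union> range f| \<le>o continuum"
    using card_of_Un_ordLeq_infinite_Field[OF infinite_Field_continuum A(2) _ Card_order_continuum]
      P ordIso_imp_ordLeq by blast
  moreover have "continuum \<le>o |A \<union> range f|"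
    using P card_of_mono1[of "range f" "A \<union> range f"] ordIso_ordLeq_trans ordIso_symmetric by blast
  ultimately have "|A \<union> range f| =o continuum" using ordIso_iff_ordLeq by blast
  hence "|X closure_of (A \<union> range f)| =o continuum"
    using continuum_fair A(1) f(2) unfolding continuum_fair_def by blast
  moreover have "|X closure_of A| \<le>o |X closure_of (A \<union> range f)|"
    by (intro card_of_mono1 closure_of_mono) blast
  ultimately show ?thesis by (metis ordLeq_ordIso_trans)
qed

definition nbhd_closure :: "'a set \<Rightarrow> 'a set" where
  "nbhd_closure Y = X closure_of (Y \<union> (\<Union>y\<in>Y. nbhd y))"

lemma card_nbhd_closure_le:
  assumes Y: "Y \<subseteq> topspace X" "|Y| \<le>o continuum"
  shows "|nbhd_closure Y| \<le>o continuum"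
proof -
  have "|\<Union>y\<in>Y. nbhd y| \<le>o continuum"
    using card_of_UNION_ordLeq_infinite_Field[OF infinite_Field_continuum Card_order_continuum Y(2)]
      nbhd(2) Y(1) by blast
  hence "|Y \<union> (\<Union>y\<in>Y. nbhd y)| \<le>o continuum"
    by (rule card_of_Un_ordLeq_infinite_Field[OF infinite_Field_continuum Y(2) _ Card_order_continuum])
  moreover have "Y \<union> (\<Union>y\<in>Y. nbhd y) \<subseteq> topspace X" using Y(1) nbhd(1) by blast
  ultimately show ?thesis unfolding nbhd_closure_def by (rule card_closure_of_le[rotated])
qed

definition fresh :: "'a set \<Rightarrow> 'a" where
  "fresh S = (SOME q. q \<in> topspace X \<and> q \<notin> S)"

definition next_stage :: "(real \<Rightarrow> 'a set) \<Rightarrow> real \<Rightarrow> 'a set" where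
  "next_stage W a = (let P = (\<Union>b\<in>underS continuum a. W b) in nbhd_closure (P \<union> {fresh P}))"

definition stage :: "real \<Rightarrow> 'a set" where
  "stage = wo_rel.worec continuum next_stage"

definition stages_below :: "real \<Rightarrow> 'a set" where
  "stages_below a = (\<Union>b\<in>underS continuum a. stage b)"

definition fresh_point :: "real \<Rightarrow> 'a" where
  "fresh_point a = fresh (stages_below a)"

lemma stage_eq: "stage a = nbhd_closure (stages_below a \<union> {fresh_point a})"
proof -
  have "wo_rel.adm_wo continuum next_stage"
    unfolding wo_rel.adm_wo_def[OF wo_rel_continuum]
  proof (intro allI impI)
    fix f g :: "real \<Rightarrow> 'a set" and x assume "\<forall>y\<in>underS continuum x. f y = g y"
    hence "(\<Union>b\<in>underS continuum x. f b) = (\<Union>b\<in>underS continuum x. g b)" by auto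
    thus "next_stage f x = next_stage g x" unfolding next_stage_def by simp
  qed
  hence "stage = next_stage stage"
    unfolding stage_def by (rule wo_rel.worec_fixpoint[OF wo_rel_continuum])
  thus ?thesis unfolding stages_below_def fresh_point_def next_stage_def Let_def by metis
qed

lemma stage_subset_topspace: "stage a \<subseteq> topspace X"
  unfolding stage_eq nbhd_closure_def by (rule closure_of_subset_topspace)

lemma stages_below_subset_topspace: "stages_below a \<subseteq> topspace X"
  unfolding stages_below_def using stage_subset_topspace by blast

lemma stage_subset_stages_below: "b \<in> underS continuum a \<Longrightarrow> stage b \<subseteq> stages_below a"
  unfolding stages_below_def by blast

lemma fresh_point_if_card_stages_below_le:
  assumes "|stages_below a| \<le>o continuum"
  shows "fresh_point a \<in> topspace X \<and> fresh_point a \<notin> stages_below a"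
proof -
  have "\<not> topspace X \<subseteq> stages_below a"
  proof
    assume "topspace X \<subseteq> stages_below a"
    hence "|topspace X| \<le>o continuum" using assms card_of_mono1 ordLeq_transitive by blast
    thus False using continuum_less_topspace not_ordLess_ordLeq by blast
  qed
  hence "\<exists>q. q \<in> topspace X \<and> q \<notin> stages_below a" by blast
  thus ?thesis unfolding fresh_point_def fresh_def by (rule someI_ex)
qed

lemma card_stages_below_le_if:
  assumes "\<And>b. b \<in> underS continuum a \<Longrightarrow> |stage b| \<le>o continuum"
  shows "|stages_below a| \<le>o continuum"
proof -
  have "|underS continuum a| \<le>o continuum"
    by (rule ordLess_imp_ordLeq[OF card_of_underS[OF Card_order_continuum]]) simp
  thus ?thesis unfolding stages_below_def
    using card_of_UNION_ordLeq_infinite_Field[OF infinite_Field_continuum Card_order_continuum]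
      assms by blast
qed

lemma card_stage_le: "|stage a| \<le>o continuum"
proof (induction a rule: wf_induct[OF wo_rel.WF[OF wo_rel_continuum]])
  case (1 a)
  hence small: "|stages_below a| \<le>o continuum"
    by (intro card_stages_below_le_if) (simp add: underS_def)
  hence "|stages_below a \<union> {fresh_point a}| \<le>o continuum"
    by (rule card_of_Un_ordLeq_infinite_Field[OF infinite_Field_continuum _
          card_singleton_le_continuum Card_order_continuum])
  moreover have "stages_below a \<union> {fresh_point a} \<subseteq> topspace X"
    using stages_below_subset_topspace fresh_point_if_card_stages_below_le[OF small] by blast
  ultimately show ?case unfolding stage_eq by (rule card_nbhd_closure_le[rotated])
qed

lemma card_stages_below_le: "|stages_below a| \<le>o continuum"
  using card_stages_below_le_if card_stage_le by blast

lemma fresh_point_in_topspace: "fresh_point a \<in> topspace X"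
  and fresh_point_notin_stages_below: "fresh_point a \<notin> stages_below a"
  using fresh_point_if_card_stages_below_le[OF card_stages_below_le] by blast+

lemma fresh_point_in_stage: "fresh_point a \<in> stage a"
  and nbhd_subset_stage: "y \<in> stages_below a \<Longrightarrow> nbhd y \<subseteq> stage a"
  and closure_of_stages_below_subset_stage: "X closure_of (stages_below a) \<subseteq> stage a"
proof -
  let ?Y = "stages_below a \<union> {fresh_point a}"
  have "?Y \<union> (\<Union>y\<in>?Y. nbhd y) \<subseteq> topspace X"
    using stages_below_subset_topspace fresh_point_in_topspace nbhd(1) by blast
  hence "?Y \<union> (\<Union>y\<in>?Y. nbhd y) \<subseteq> stage a"
    unfolding stage_eq nbhd_closure_def by (rule closure_of_subset)
  thus "fresh_point a \<in> stage a" "y \<in> stages_below a \<Longrightarrow> nbhd y \<subseteq> stage a" by blast+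
  show "X closure_of (stages_below a) \<subseteq> stage a"
    unfolding stage_eq nbhd_closure_def by (rule closure_of_mono) blast
qed

definition stages_union :: "real set \<Rightarrow> 'a set" where
  "stages_union J = (\<Union>b\<in>J. stage b)"

lemma stages_union_subset_topspace: "stages_union J \<subseteq> topspace X"
  unfolding stages_union_def using stage_subset_topspace by blast

lemma openin_stages_union:
  assumes no_greatest: "\<forall>b\<in>J. \<exists>j\<in>J. b \<in> underS continuum j"
  shows "openin X (stages_union J)"
  unfolding openin_subopen[of X "stages_union J"]
proof
  fix x assume "x \<in> stages_union J"
  then obtain b where b: "b \<in> J" "x \<in> stage b" unfolding stages_union_def by blast
  then obtain j where j: "j \<in> J" "b \<in> underS continuum j" using no_greatest by blast
  have x: "x \<in> topspace X" using b(2) stage_subset_topspace by blast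
  have "nbhd x \<subseteq> stage j"
    using nbhd_subset_stage stage_subset_stages_below[OF j(2)] b(2) by blast
  moreover have "stage j \<subseteq> stages_union J" using j(1) unfolding stages_union_def by blast
  ultimately have "X interior_of nbhd x \<subseteq> stages_union J"
    using interior_of_subset[of X "nbhd x"] by blast
  thus "\<exists>T. openin X T \<and> x \<in> T \<and> T \<subseteq> stages_union J" using nbhd(3)[OF x]
    by (intro exI[of _ "X interior_of nbhd x"]) simp
qed

text \<open>A point of the closure lies in the closure of a subset of size at most its tightness,
  whose points come from boundedly many stages; so it lies in the closure of one
  \<open>stages_below j\<close>.\<close>
lemma closedin_stages_union:
  assumes tight: "\<forall>x\<in>topspace X. tightness_below_cf_continuum X x"
    and bounded: "\<And>K :: real set. below_cf_continuum K \<Longrightarrow> small_sets_bounded continuum J K"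
  shows "closedin X (stages_union J)"
proof -
  have "X closure_of (stages_union J) \<subseteq> stages_union J"
  proof
    fix x assume x_cl: "x \<in> X closure_of (stages_union J)"
    hence "x \<in> topspace X" using closure_of_subset_topspace[of X "stages_union J"] by blast
    then obtain K :: "real set" where K: "below_cf_continuum K" "tightness_le X x K"
      using tight unfolding tightness_below_cf_continuum_def by blast
    obtain B where B: "B \<subseteq> stages_union J" "|B| \<le>o |K|" "x \<in> X closure_of B"
      using K(2) x_cl stages_union_subset_topspace unfolding tightness_le_def by blast
    define idx where "idx y = (SOME b. b \<in> J \<and> y \<in> stage b)" for y
    have idx: "idx y \<in> J \<and> y \<in> stage (idx y)" if "y \<in> B" for y
    proof -
      have "\<exists>b. b \<in> J \<and> y \<in> stage b" using that B(1) unfolding stages_union_def by blast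
      thus ?thesis unfolding idx_def by (rule someI_ex)
    qed
    have "|idx ` B| \<le>o |K|" using card_of_image B(2) ordLeq_transitive by blast
    moreover have "idx ` B \<subseteq> J" using idx by blast
    ultimately obtain j where j: "j \<in> J" "idx ` B \<subseteq> underS continuum j"
      using bounded[OF K(1)] unfolding small_sets_bounded_def by blast
    have "B \<subseteq> stages_below j" unfolding stages_below_def using idx j by blast
    hence "x \<in> X closure_of (stages_below j)" using B(3) closure_of_mono by blast
    thus "x \<in> stages_union J"
      using closure_of_stages_below_subset_stage j(1) unfolding stages_union_def by blast
  qed
  thus ?thesis using closure_of_subset_eq stages_union_subset_topspace by blast
qed

lemma openin_stages_union_UNIV: "openin X (stages_union UNIV)"
  by (rule openin_stages_union) (use continuum_no_greatest in blast)

lemma fresh_point_neq_later: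
  assumes "a \<in> underS continuum b"
  shows "fresh_point a \<noteq> fresh_point b"
proof -
  have "fresh_point a \<in> stages_below b"
    using subsetD[OF stage_subset_stages_below[OF assms] fresh_point_in_stage] .
  thus ?thesis using fresh_point_notin_stages_below[of b] by metis
qed

lemma card_stages_union_UNIV: "|stages_union UNIV| =o continuum"
proof -
  have "|UNIV :: real set| \<le>o continuum"
    unfolding continuum_def by (rule ordLeq_refl[OF card_of_Card_order])
  hence "|stages_union UNIV| \<le>o continuum" unfolding stages_union_def
    by (rule card_of_UNION_ordLeq_infinite_Field[OF infinite_Field_continuum Card_order_continuum])
      (simp add: card_stage_le)
  moreover have "inj fresh_point"
  proof (rule injI, rule ccontr)
    fix a b assume "fresh_point a = fresh_point b" "a \<noteq> b"
    thus False
      using continuum_underS_cases[of a b] fresh_point_neq_later[of a b] fresh_point_neq_later[of b a]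
      by auto
  qed
  hence "continuum \<le>o |stages_union UNIV|"
    unfolding continuum_def card_of_ordLeq[symmetric] stages_union_def
    using fresh_point_in_stage by blast
  ultimately show ?thesis by (simp add: ordIso_iff_ordLeq)
qed

definition open_kernel :: "real \<Rightarrow> 'a set" where
  "open_kernel b = (\<Union>y\<in>stage b. X interior_of nbhd y)"

lemma openin_open_kernel: "openin X (open_kernel b)"
  unfolding open_kernel_def by (intro openin_Union) auto

lemma stage_subset_open_kernel: "stage b \<subseteq> open_kernel b"
  unfolding open_kernel_def using nbhd(3) stage_subset_topspace by blast

lemma open_kernel_subset_stage:
  assumes "b \<in> underS continuum j"
  shows "open_kernel b \<subseteq> stage j"
proof -
  have "X interior_of nbhd y \<subseteq> stage j" if "y \<in> stage b" for y
    using nbhd_subset_stage[of y j] interior_of_subset[of X "nbhd y"] that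
      stage_subset_stages_below[OF assms] by blast
  thus ?thesis unfolding open_kernel_def by blast
qed

text \<open>Cover the chain by the open kernels of the stages in \<open>J\<close> and by its clopen part outside
  \<open>stages_union J\<close>. A subcover of size \<open>\<le> |K|\<close> uses kernels of boundedly many stages, all
  below some \<open>j \<in> J\<close>, so it misses the fresh point of a stage after \<open>j\<close>.\<close>
lemma not_lindelof_le_stages_union_UNIV:
  assumes bounded: "small_sets_bounded continuum J K" and "K \<noteq> {}"
    and closed: "closedin X (stages_union J)"
  shows "\<not> lindelof_le X (stages_union UNIV) K"
proof
  assume lindelof: "lindelof_le X (stages_union UNIV) K"
  let ?C = "open_kernel ` J \<union> {stages_union UNIV - stages_union J}"
  have "\<forall>V\<in>?C. openin X V"
    using openin_open_kernel openin_diff[OF openin_stages_union_UNIV closed] by blast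
  moreover have "stages_union UNIV \<subseteq> \<Union>?C"
  proof
    fix u assume u: "u \<in> stages_union UNIV"
    show "u \<in> \<Union>?C"
    proof (cases "u \<in> stages_union J")
      case True
      then obtain b where "b \<in> J" "u \<in> stage b" unfolding stages_union_def by blast
      thus ?thesis using stage_subset_open_kernel by blast
    next
      case False
      thus ?thesis using u by blast
    qed
  qed
  ultimately obtain \<V> where \<V>: "\<V> \<subseteq> ?C" "stages_union UNIV \<subseteq> \<Union>\<V>" "|\<V>| \<le>o |K|"
    using lindelof unfolding lindelof_le_def by meson
  define idx where "idx V = (SOME b. b \<in> J \<and> V = open_kernel b)" for V
  have idx: "idx V \<in> J \<and> V = open_kernel (idx V)" if "V \<in> open_kernel ` J" for V
  proof -
    have "\<exists>b. b \<in> J \<and> V = open_kernel b" using that by blast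
    thus ?thesis unfolding idx_def by (rule someI_ex)
  qed
  let ?B = "idx ` (\<V> \<inter> open_kernel ` J)"
  have "|?B| \<le>o |\<V> \<inter> open_kernel ` J|" by (rule card_of_image)
  moreover have "|\<V> \<inter> open_kernel ` J| \<le>o |\<V>|" by (rule card_of_mono1) blast
  ultimately have "|?B| \<le>o |K|" using \<V>(3) by (metis ordLeq_transitive)
  moreover have "?B \<subseteq> J" using idx by blast
  ultimately obtain j where j: "j \<in> J" "?B \<subseteq> underS continuum j"
    using bounded unfolding small_sets_bounded_def by blast
  obtain j' where j': "j' \<in> J" "j \<in> underS continuum j'"
    using small_sets_bounded_no_greatest[OF bounded \<open>K \<noteq> {}\<close> j(1)] by blast
  have "fresh_point j' \<in> stages_union J"
    using fresh_point_in_stage j'(1) unfolding stages_union_def by blast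
  moreover from this obtain V where V: "V \<in> \<V>" "fresh_point j' \<in> V"
    using \<V>(2) unfolding stages_union_def by blast
  ultimately have "V \<in> open_kernel ` J" using \<V>(1) by blast
  hence "idx V \<in> underS continuum j" "V = open_kernel (idx V)" using idx j(2) V(1) by blast+
  hence "V \<subseteq> stages_below j'"
    using open_kernel_subset_stage stage_subset_stages_below[OF j'(2)] by blast
  thus False using V(2) fresh_point_notin_stages_below by blast
qed

lemma closedin_stages_union_UNIV:
  assumes "\<forall>x\<in>topspace X. tightness_below_cf_continuum X x"
  shows "closedin X (stages_union UNIV)"
  by (rule closedin_stages_union[OF assms small_sets_bounded_continuum_UNIV])

text \<open>If \<open>|K| < cf(\<mathfrak>c)\<close> the whole chain is bounded for \<open>K\<close>; otherwise it is cut at an initial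
  segment that is, and whose union is closed since tightness is below \<open>cf(\<mathfrak>c) \<le> |K|\<close>.\<close>
lemma not_lindelof_le_below_continuum:
  assumes tight: "\<forall>x\<in>topspace X. tightness_below_cf_continuum X x"
    and K: "infinite (K :: real set)" "|K| <o continuum"
  shows "\<not> lindelof_le X (stages_union UNIV) K"
proof (cases "below_cf_continuum K")
  case True
  with K(1) show ?thesis
    using not_lindelof_le_stages_union_UNIV[OF small_sets_bounded_continuum_UNIV]
      closedin_stages_union_UNIV[OF tight] by auto
next
  case False
  then obtain A where A: "cofinal A continuum" "|A| \<le>o |K|"
    unfolding below_cf_continuum_def
    using not_ordLess_iff_ordLeq[OF card_of_Well_order card_of_Well_order] by blast
  have "|K| <o |Field continuum|"
    unfolding Field_continuum using K(2) by (simp only: continuum_def)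
  then obtain a where J: "small_sets_bounded continuum (underS continuum a) K"
    using small_sets_bounded_underS[OF Well_order_continuum K(1) _ A] by blast
  have "small_sets_bounded continuum (underS continuum a) K'" if "below_cf_continuum K'" for K'
  proof (rule small_sets_bounded_mono[OF J])
    have "|K'| <o |A|" using that A(1) unfolding below_cf_continuum_def by blast
    thus "|K'| \<le>o |K|" using A(2) by (metis ordLess_ordLeq_trans ordLess_imp_ordLeq)
  qed
  hence "closedin X (stages_union (underS continuum a))"
    by (rule closedin_stages_union[OF tight])
  with J K(1) show ?thesis using not_lindelof_le_stages_union_UNIV by auto
qed

end

theorem theorem4p2:
  fixes X :: "'a topology"
  assumes "locally_continuum X"
    and "continuum_fair X"
    and "\<forall>x\<in>topspace X. tightness_below_cf_continuum X x"
    and "(continuum, card_of (topspace X)) \<in> ordLess"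
  shows "\<exists>U. closedin X U \<and> openin X U \<and> (card_of U, continuum) \<in> ordIso
             \<and> lindelof_eq_continuum X U"
proof -
  interpret continuum_fair_space X
    using assms(1,2,4) by unfold_locales
  let ?U = "stages_union UNIV"
  have card: "|?U| =o continuum" by (rule card_stages_union_UNIV)
  hence "lindelof_le X ?U (UNIV :: real set)"
    by (intro lindelof_le_card) (simp add: ordIso_imp_ordLeq continuum_def)
  hence "lindelof_eq_continuum X ?U"
    unfolding lindelof_eq_continuum_def
    using not_lindelof_le_below_continuum[OF assms(3)] by blast
  thus ?thesis
    using closedin_stages_union_UNIV[OF assms(3)] openin_stages_union_UNIV card by blast
qed

end
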